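(* The poset $(P;\leq)$ defined below is order-isomorphic to an order component of some representable poset. Moreover, $(P;\le)$ is connected (it has a single order component).
   Context: Let $P=\{p\}\cup\{p_{i_0,\ldots,i_n}: 0\le n<\omega,\ i_0,\ldots,i_n\in\omega\}$ (all these symbols distinct). Let $\le$ be the reflexive–transitive closure of the following strict relations: (0) for all $0\le j<i<\omega$: $p<p_i<p_j$; (E) for all $r\ge 0$, all $i_0,\ldots,i_{2r}\in\omega$, all $k\le i_{2r}$ and all $i<j<\omega$: $p_{i_0,\ldots,i_{2r},i}<p_{i_0,\ldots,i_{2r},j}<p_{i_0,\ldots,i_{2r-1},k}$ (for $r=0$ the last element is $p_k$); (O) for all $r\ge0$, all $i_0,\ldots,i_{2r+1}\in\omega$, all $k\le i_{2r+1}$ and all $j<i<\omega$: $p_{i_0,\ldots,i_{2r},k}<p_{i_0,\ldots,i_{2r+1},i}<p_{i_0,\ldots,i_{2r+1},j}$. This $\le$ is a partial order on the countable set $P$. A poset is representable if it is order-isomorphic to the poset of prime ideals (ordered by inclusion) of a bounded distributive lattice, equivalently iff it carries a compact topology in which any $x\not\ge y$ are separated by a clopen down-set containing $x$ and not $y$. An order component of a poset is an equivalence class of the transitive closure of the comparability relation. *)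

theory Defs
  imports "HOL-Analysis.Abstract_Topology"
begin

text \<open>Elements of P: the empty list encodes p, a nonempty list [i0,...,in]
  encodes p_{i0,...,in}.  gen x y encodes the generating strict relation x < y.\<close>

inductive gen :: "nat list \<Rightarrow> nat list \<Rightarrow> bool" where
  r0a: "gen [] [i]"
| r0b: "j < i \<Longrightarrow> gen [i] [j]"
| rEa: "odd (length a) \<Longrightarrow> i < j \<Longrightarrow> gen (a @ [i]) (a @ [j])"
| rEb: "odd (length a) \<Longrightarrow> k \<le> last a \<Longrightarrow> gen (a @ [j]) (butlast a @ [k])"
| rOa: "even (length a) \<Longrightarrow> a \<noteq> [] \<Longrightarrow> k \<le> last a \<Longrightarrow> gen (butlast a @ [k]) (a @ [i])"
| rOb: "even (length a) \<Longrightarrow> a \<noteq> [] \<Longrightarrow> j < i \<Longrightarrow> gen (a @ [i]) (a @ [j])"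

definition P_le :: "nat list \<Rightarrow> nat list \<Rightarrow> bool" where
  "P_le = gen\<^sup>*\<^sup>*"

definition partial_order_on_set :: "'a set \<Rightarrow> ('a \<Rightarrow> 'a \<Rightarrow> bool) \<Rightarrow> bool" where
  "partial_order_on_set Q le \<longleftrightarrow>
     (\<forall>x\<in>Q. le x x) \<and>
     (\<forall>x\<in>Q. \<forall>y\<in>Q. le x y \<and> le y x \<longrightarrow> x = y) \<and>
     (\<forall>x\<in>Q. \<forall>y\<in>Q. \<forall>z\<in>Q. le x y \<and> le y z \<longrightarrow> le x z)"

definition down_set :: "'a set \<Rightarrow> ('a \<Rightarrow> 'a \<Rightarrow> bool) \<Rightarrow> 'a set \<Rightarrow> bool" where
  "down_set Q le U \<longleftrightarrow> U \<subseteq> Q \<and> (\<forall>x\<in>U. \<forall>y\<in>Q. le y x \<longrightarrow> y \<in> U)"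

text \<open>Representable poset (Q, le), via the topological characterization: there is a
  compact topology on Q in which any x not \<ge> y are separated by a clopen down-set
  containing x and not y.\<close>
definition representable :: "'a set \<Rightarrow> ('a \<Rightarrow> 'a \<Rightarrow> bool) \<Rightarrow> bool" where
  "representable Q le \<longleftrightarrow> partial_order_on_set Q le \<and>
     (\<exists>T :: 'a topology. topspace T = Q \<and> compact_space T \<and>
        (\<forall>x\<in>Q. \<forall>y\<in>Q. \<not> le y x \<longrightarrow>
           (\<exists>U. openin T U \<and> closedin T U \<and> down_set Q le U \<and> x \<in> U \<and> y \<notin> U)))"

definition comparable_in :: "'a set \<Rightarrow> ('a \<Rightarrow> 'a \<Rightarrow> bool) \<Rightarrow> 'a \<Rightarrow> 'a \<Rightarrow> bool" where
  "comparable_in Q le x y \<longleftrightarrow> x \<in> Q \<and> y \<in> Q \<and> (le x y \<or> le y x)"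

definition order_component :: "'a set \<Rightarrow> ('a \<Rightarrow> 'a \<Rightarrow> bool) \<Rightarrow> 'a set \<Rightarrow> bool" where
  "order_component Q le C \<longleftrightarrow>
     (\<exists>x\<in>Q. C = {y \<in> Q. (comparable_in Q le)\<^sup>*\<^sup>* x y})"

definition order_iso :: "('a \<Rightarrow> 'b) \<Rightarrow> 'a set \<Rightarrow> ('a \<Rightarrow> 'a \<Rightarrow> bool) \<Rightarrow> 'b set \<Rightarrow> ('b \<Rightarrow> 'b \<Rightarrow> bool) \<Rightarrow> bool" where
  "order_iso f A leA B leB \<longleftrightarrow> bij_betw f A B \<and>
     (\<forall>x\<in>A. \<forall>y\<in>A. leA x y \<longleftrightarrow> leB (f x) (f y))"

end

theory Submission
  imports Defs "HOL-Analysis.Function_Topology" "HOL-Library.Sublist"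
begin

text \<open>
  Every generating relation strictly increases the alternating weight
  \<open>\<Sum>\<^sub>m (-1)^m / (i\<^sub>m + 2)\<close> of \<open>[i\<^sub>0, \<dots>, i\<^sub>n]\<close>, so \<open>\<le>\<close> is a partial order; every list
  is comparable with its parent, so \<open>P\<close> is connected.

  View the lists as the finite branches of the tree \<open>\<omega>\<^sup><\<^sup>\<omega>\<close> and adjoin the infinite
  branches as isolated points. The set of all branches is closed in the Cantor space of subsets
  of \<open>\<omega>\<^sup><\<^sup>\<omega>\<close>, hence compact. For a node \<open>a\<close> and a bound \<open>k\<close>, the branches through one
  of the children \<open>a @ [0], \<dots>, a @ [k]\<close> form a clopen set, which is a down-set when \<open>a\<close> has
  odd length and an up-set when \<open>a\<close> has even length. A case analysis on the last entries of
  \<open>x\<close> shows that these sets and their complements separate \<open>x\<close> from every \<open>y\<close> with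
  \<open>\<not> y \<le> x\<close>, so the completed poset is representable and contains \<open>P\<close> as an order component.
\<close>

section \<open>Orders transported along maps\<close>

definition image_order :: "('a \<Rightarrow> 'b) \<Rightarrow> ('a \<Rightarrow> 'a \<Rightarrow> bool) \<Rightarrow> 'b \<Rightarrow> 'b \<Rightarrow> bool" where
  "image_order f le x y \<longleftrightarrow> x = y \<or> (\<exists>a b. x = f a \<and> y = f b \<and> le a b)"

lemma image_order_apply:
  assumes f: "inj f" and le: "partial_order_on_set UNIV le"
  shows "image_order f le (f a) (f b) \<longleftrightarrow> le a b"
proof
  assume "image_order f le (f a) (f b)"
  then have "a = b \<or> le a b"
    unfolding image_order_def by (auto dest: injD[OF f])
  moreover have "le a a"
    using le by (simp add: partial_order_on_set_def)
  ultimately show "le a b"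
    by blast
qed (auto simp: image_order_def)

lemma image_order_comp:
  assumes "inj g"
  shows "image_order (g \<circ> f) le (g x) (g y) \<longleftrightarrow> image_order f le x y"
  unfolding image_order_def comp_def using injD[OF assms] by metis

lemma partial_order_on_set_image_order:
  assumes f: "inj f" and le: "partial_order_on_set UNIV le"
  shows "partial_order_on_set Q (image_order f le)"
  unfolding partial_order_on_set_def
proof (intro conjI ballI impI)
  fix x y assume "image_order f le x y \<and> image_order f le y x"
  then show "x = y"
    using le unfolding image_order_def partial_order_on_set_def by (metis UNIV_I f injD)
next
  fix x y z assume "image_order f le x y \<and> image_order f le y z"
  then show "image_order f le x z"
    using le unfolding image_order_def partial_order_on_set_def by (metis UNIV_I f injD)
qed (simp add: image_order_def)

lemma order_iso_image_order:
  assumes "inj f" and "partial_order_on_set UNIV le"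
  shows "order_iso f UNIV le (range f) (image_order f le)"
  using assms by (simp add: order_iso_def image_order_apply inj_on_imp_bij_betw)

lemma order_iso_image_order_comp:
  assumes "inj g"
  shows "order_iso g Q (image_order f le) (g ` Q) (image_order (g \<circ> f) le)"
  using assms by (simp add: order_iso_def image_order_comp inj_on_imp_bij_betw inj_on_subset)

lemma order_component_image_order:
  assumes range: "range f \<subseteq> Q" and connected: "order_component UNIV le UNIV"
  shows "order_component Q (image_order f le) (range f)"
proof -
  obtain a where a: "\<And>b. (comparable_in UNIV le)\<^sup>*\<^sup>* a b"
    using connected by (auto simp: order_component_def)
  have reach: "(comparable_in Q (image_order f le))\<^sup>*\<^sup>* (f a) (f b)" for b
    using a[of b]
  proof (induction rule: rtranclp_induct)
    case (step b c)
    then have "comparable_in Q (image_order f le) (f b) (f c)"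
      using range by (auto simp: comparable_in_def image_order_def)
    with step.IH show ?case by simp
  qed simp
  have stay: "y \<in> range f" if "(comparable_in Q (image_order f le))\<^sup>*\<^sup>* x y" "x \<in> range f" for x y
    using that by induction (auto simp: comparable_in_def image_order_def)
  have "range f = {y \<in> Q. (comparable_in Q (image_order f le))\<^sup>*\<^sup>* (f a) y}"
  proof (intro equalityI subsetI)
    fix y assume "y \<in> range f"
    then show "y \<in> {y \<in> Q. (comparable_in Q (image_order f le))\<^sup>*\<^sup>* (f a) y}"
      using range reach by auto
  next
    fix y assume "y \<in> {y \<in> Q. (comparable_in Q (image_order f le))\<^sup>*\<^sup>* (f a) y}"
    then show "y \<in> range f"
      using stay by blast
  qed
  moreover have "f a \<in> Q"
    using range by blast
  ultimately show ?thesis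
    unfolding order_component_def by blast
qed

lemma partial_order_on_set_order_iso:
  assumes po: "partial_order_on_set Q le" and iso: "order_iso g Q le Q' le'"
  shows "partial_order_on_set Q' le'"
proof -
  have Q': "Q' = g ` Q"
    using iso by (simp add: order_iso_def bij_betw_def)
  have le: "\<And>x y. x \<in> Q \<Longrightarrow> y \<in> Q \<Longrightarrow> le' (g x) (g y) \<longleftrightarrow> le x y"
    using iso unfolding order_iso_def by blast
  show ?thesis
    unfolding partial_order_on_set_def Q' Ball_image_comp comp_def
  proof (intro conjI ballI impI)
    show "le' (g x) (g x)" if "x \<in> Q" for x
      using po that le unfolding partial_order_on_set_def by metis
    show "g x = g y" if "x \<in> Q" "y \<in> Q" "le' (g x) (g y) \<and> le' (g y) (g x)" for x y
      using po that le unfolding partial_order_on_set_def by metis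
    show "le' (g x) (g z)" if "x \<in> Q" "y \<in> Q" "z \<in> Q" "le' (g x) (g y) \<and> le' (g y) (g z)" for x y z
      using po that le unfolding partial_order_on_set_def by metis
  qed
qed

section \<open>Representability is invariant under isomorphism\<close>

lemma closedin_pullback_topology:
  assumes "closedin T U" and "h ` A \<subseteq> topspace T"
  shows "closedin (pullback_topology A h T) (h -` U \<inter> A)"
proof -
  have "openin T (topspace T - U)"
    using assms(1) by (simp add: closedin_def)
  moreover have "A - (h -` U \<inter> A) = h -` (topspace T - U) \<inter> A"
    using assms(2) by auto
  ultimately have "openin (pullback_topology A h T) (A - (h -` U \<inter> A))"
    unfolding openin_pullback_topology by blast
  moreover have "topspace (pullback_topology A h T) = A"
    using assms(2) by (auto simp: topspace_pullback_topology)
  ultimately show ?thesis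
    by (simp add: closedin_def)
qed

lemma compact_space_pullback_inv_into:
  assumes g: "bij_betw g Q Q'" and T: "topspace T = Q" "compact_space T"
  shows "compact_space (pullback_topology Q' (inv_into Q g) T)"
proof -
  have "continuous_map T (pullback_topology Q' (inv_into Q g) T) g"
  proof (rule continuous_map_pullback')
    show "continuous_map T T (inv_into Q g \<circ> g)"
      using continuous_map_id
      by (rule continuous_map_eq) (use g T(1) in \<open>simp add: bij_betw_inv_into_left\<close>)
    show "topspace T \<subseteq> g -` Q'"
      using g T(1) by (auto simp: bij_betw_def)
  qed
  then have "compactin (pullback_topology Q' (inv_into Q g) T) (g ` topspace T)"
    using T(2) image_compactin compact_space_def by blast
  moreover have "topspace (pullback_topology Q' (inv_into Q g) T) = Q'"
    using g by (auto simp: topspace_pullback_topology T(1) bij_betw_def inv_into_into)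
  ultimately show ?thesis
    using g T(1) by (simp add: compact_space_def bij_betw_def)
qed

lemma down_set_order_iso:
  assumes U: "down_set Q le U" and iso: "order_iso g Q le Q' le'"
  shows "down_set Q' le' (inv_into Q g -` U \<inter> Q')"
  unfolding down_set_def
proof (intro conjI ballI impI)
  have g: "bij_betw g Q Q'"
    using iso by (simp add: order_iso_def)
  fix u' v' assume u': "u' \<in> inv_into Q g -` U \<inter> Q'" and v': "v' \<in> Q'" and "le' v' u'"
  then have "le (inv_into Q g v') (inv_into Q g u')"
    using iso g by (auto simp: order_iso_def bij_betw_inv_into_right inv_into_into bij_betw_def)
  then show "v' \<in> inv_into Q g -` U \<inter> Q'"
    using U u' v' g unfolding down_set_def by (auto simp: bij_betw_def inv_into_into)
qed simp

lemma representable_order_iso: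
  assumes rep: "representable Q le" and iso: "order_iso g Q le Q' le'"
  shows "representable Q' le'"
proof -
  obtain T where T: "topspace T = Q" "compact_space T"
    and sep: "\<And>x y. x \<in> Q \<Longrightarrow> y \<in> Q \<Longrightarrow> \<not> le y x \<Longrightarrow>
      \<exists>U. openin T U \<and> closedin T U \<and> down_set Q le U \<and> x \<in> U \<and> y \<notin> U"
    using rep unfolding representable_def by blast
  have g: "bij_betw g Q Q'"
    using iso by (simp add: order_iso_def)
  define h where "h = inv_into Q g"
  have h: "h x' \<in> Q" "g (h x') = x'" if "x' \<in> Q'" for x'
    using that g unfolding h_def by (auto simp: bij_betw_inv_into_right inv_into_into bij_betw_def)
  define T' where "T' = pullback_topology Q' h T"
  have "\<exists>U'. openin T' U' \<and> closedin T' U' \<and> down_set Q' le' U' \<and> x' \<in> U' \<and> y' \<notin> U'"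
    if x': "x' \<in> Q'" and y': "y' \<in> Q'" and nle: "\<not> le' y' x'" for x' y'
  proof -
    have "\<not> le (h y') (h x')"
      using iso x' y' nle h unfolding order_iso_def by metis
    then obtain U where U: "openin T U" "closedin T U" "down_set Q le U" "h x' \<in> U" "h y' \<notin> U"
      using sep[OF h(1)[OF x'] h(1)[OF y']] by blast
    have "openin T' (h -` U \<inter> Q')"
      using U(1) by (auto simp: T'_def openin_pullback_topology)
    moreover have "closedin T' (h -` U \<inter> Q')"
      unfolding T'_def using U(2) h T(1) by (intro closedin_pullback_topology) auto
    moreover have "down_set Q' le' (h -` U \<inter> Q')"
      unfolding h_def using U(3) iso by (rule down_set_order_iso)
    ultimately show ?thesis
      using U x' y' by blast
  qed
  moreover have "topspace T' = Q'"
    using h T(1) by (auto simp: T'_def topspace_pullback_topology)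
  moreover have "compact_space T'"
    unfolding T'_def h_def using g T by (rule compact_space_pullback_inv_into)
  ultimately show ?thesis
    using rep iso partial_order_on_set_order_iso
    unfolding representable_def by blast
qed

section \<open>The poset \<open>P\<close>\<close>

lemma gen_cases [consumes 1, case_names root top odd_siblings odd_child_sibling even_child_sibling even_siblings]:
  assumes "gen x y"
  obtains (root) i where "x = []" "y = [i]"
  | (top) i j where "j < i" "x = [i]" "y = [j]"
  | (odd_siblings) c i j where "odd (length c)" "i < j" "x = c @ [i]" "y = c @ [j]"
  | (odd_child_sibling) b m j k where "even (length b)" "k \<le> m" "x = b @ [m, j]" "y = b @ [k]"
  | (even_child_sibling) b m k i where "odd (length b)" "k \<le> m" "x = b @ [k]" "y = b @ [m, i]"
  | (even_siblings) c i j where "even (length c)" "c \<noteq> []" "j < i" "x = c @ [i]" "y = c @ [j]"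
  using assms
proof cases
  case (rEb a k j)
  then obtain b m where "a = b @ [m]"
    by (cases a rule: rev_cases) auto
  with rEb odd_child_sibling show ?thesis
    by simp
next
  case (rOa a k i)
  then obtain b m where "a = b @ [m]"
    by (cases a rule: rev_cases) auto
  with rOa even_child_sibling show ?thesis
    by simp
qed (use root top odd_siblings even_siblings in auto)

definition weight :: "nat list \<Rightarrow> real" where
  "weight a = (\<Sum>n<length a. (-1) ^ n / (real (a ! n) + 2))"

lemma weight_Nil [simp]: "weight [] = 0"
  by (simp add: weight_def)

lemma weight_snoc: "weight (a @ [i]) = weight a + (-1) ^ length a / (real i + 2)"
  by (simp add: weight_def nth_append)

lemma gen_weight_less:
  assumes "gen x y"
  shows "weight x < weight y"
  using assms
proof (cases rule: gen_cases)
  case (root i)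
  then show ?thesis using weight_snoc[of "[]" i] by simp
next
  case (top i j)
  then show ?thesis using weight_snoc[of "[]" i] weight_snoc[of "[]" j] by (simp add: frac_less2)
next
  case (odd_siblings c i j)
  then show ?thesis by (simp add: weight_snoc frac_less2)
next
  case (odd_child_sibling b m j k)
  have "1 / (real m + 2) \<le> 1 / (real k + 2)"
    using odd_child_sibling by (simp add: frac_le)
  moreover have "weight x = weight b + 1 / (real m + 2) - 1 / (real j + 2)"
    and "weight y = weight b + 1 / (real k + 2)"
    using odd_child_sibling weight_snoc[of "b @ [m]" j] by (simp_all add: weight_snoc)
  moreover have "0 < 1 / (real j + 2)"
    by simp
  ultimately show ?thesis
    by linarith
next
  case (even_child_sibling b m k i)
  have "1 / (real m + 2) \<le> 1 / (real k + 2)"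
    using even_child_sibling by (simp add: frac_le)
  moreover have "weight x = weight b - 1 / (real k + 2)"
    and "weight y = weight b - 1 / (real m + 2) + 1 / (real i + 2)"
    using even_child_sibling weight_snoc[of "b @ [m]" i] by (simp_all add: weight_snoc)
  moreover have "0 < 1 / (real i + 2)"
    by simp
  ultimately show ?thesis
    by linarith
next
  case (even_siblings c i j)
  then show ?thesis by (simp add: weight_snoc frac_less2)
qed

lemma P_le_weight_less: "P_le x y \<Longrightarrow> x = y \<or> weight x < weight y"
  unfolding P_le_def
  by (induction rule: rtranclp_induct) (auto dest: gen_weight_less)

lemma P_le_antisym:
  assumes "P_le x y" and "P_le y x"
  shows "x = y"
  using P_le_weight_less[OF assms(1)] P_le_weight_less[OF assms(2)] by auto

lemma partial_order_P_le: "partial_order_on_set UNIV P_le"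
  unfolding partial_order_on_set_def
  by (auto simp: P_le_antisym) (simp_all add: P_le_def)

lemma gen_imp_P_le: "gen x y \<Longrightarrow> P_le x y"
  by (simp add: P_le_def)

lemma P_le_even_parent: "even (length b) \<Longrightarrow> P_le b (b @ [k])"
proof (cases b rule: rev_cases)
  case (snoc c m)
  moreover assume "even (length b)"
  ultimately show ?thesis
    using gen.rOa[of b m k] by (simp add: gen_imp_P_le)
qed (simp add: gen.r0a gen_imp_P_le)

lemma P_le_even_siblings:
  assumes "even (length b)" and "k \<le> j"
  shows "P_le (b @ [j]) (b @ [k])"
proof (cases "j = k")
  case False
  then have "gen (b @ [j]) (b @ [k])"
    using assms gen.r0b[of k j] gen.rOb[of b k j] by (cases "b = []") auto
  then show ?thesis
    by (rule gen_imp_P_le)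
qed (simp add: P_le_def)

lemma P_le_odd_siblings:
  assumes "odd (length b)" and "i \<le> k"
  shows "P_le (b @ [i]) (b @ [k])"
proof (cases "i = k")
  case False
  then show ?thesis
    using assms gen.rEa[of b i k] by (simp add: gen_imp_P_le)
qed (simp add: P_le_def)

lemma P_le_odd_child_sibling: "even (length b) \<Longrightarrow> k \<le> m \<Longrightarrow> P_le (b @ [m, j]) (b @ [k])"
  using gen.rEb[of "b @ [m]" k j] by (simp add: gen_imp_P_le)

lemma P_le_even_child_sibling: "odd (length b) \<Longrightarrow> k \<le> m \<Longrightarrow> P_le (b @ [k]) (b @ [m, i])"
  using gen.rOa[of "b @ [m]" k i] by (simp add: gen_imp_P_le)

lemma order_component_P_le: "order_component UNIV P_le UNIV"
proof -
  have "comparable_in UNIV P_le b (b @ [k])" for b k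
  proof (cases "even (length b)")
    case False
    then obtain c m where "b = c @ [m]" "even (length c)"
      by (cases b rule: rev_cases) auto
    then show ?thesis
      using P_le_odd_child_sibling[of c m m k] by (simp add: comparable_in_def)
  qed (simp add: comparable_in_def P_le_even_parent)
  then have "(comparable_in UNIV P_le)\<^sup>*\<^sup>* [] b" for b
    by (induction b rule: rev_induct) (auto intro: rtranclp.rtrancl_into_rtrancl)
  then show ?thesis
    unfolding order_component_def by blast
qed

section \<open>Finite branches and their separation by cylinders\<close>

definition finite_branch :: "'a list \<Rightarrow> 'a list \<Rightarrow> bool" where
  "finite_branch a = (\<lambda>l. prefix l a)"

definition through :: "(nat list \<Rightarrow> bool) \<Rightarrow> nat list \<Rightarrow> nat \<Rightarrow> bool" where
  "through s a k \<longleftrightarrow> (\<exists>i\<le>k. s (a @ [i]))"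

lemma through_finite_branch: "through (finite_branch y) a k \<longleftrightarrow> (\<exists>i\<le>k. prefix (a @ [i]) y)"
  by (simp add: through_def finite_branch_def)

lemma snoc_prefix_snoc_iff: "prefix (a @ [i]) (c @ [j]) \<longleftrightarrow> a = c \<and> i = j \<or> prefix (a @ [i]) c"
  by (auto simp: prefix_snoc)

lemma snoc_prefix_append_pair_iff:
  "prefix (a @ [i]) (c @ [m, j]) \<longleftrightarrow> a = c @ [m] \<and> i = j \<or> prefix (a @ [i]) (c @ [m])"
  using snoc_prefix_snoc_iff[of a i "c @ [m]" j] by simp

lemma strict_prefix_snoc_prefix: "strict_prefix z y \<Longrightarrow> \<exists>j. prefix (z @ [j]) y"
  by (auto elim!: strict_prefixE' simp: prefix_def)

lemma gen_through_odd:
  assumes "gen x y" and "odd (length a)" and "through (finite_branch y) a k"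
  shows "through (finite_branch x) a k"
  using assms(1) by (cases rule: gen_cases) (use assms(2,3) in \<open>auto intro: less_imp_le
    simp: through_finite_branch prefix_Cons snoc_prefix_snoc_iff snoc_prefix_append_pair_iff\<close>)

lemma gen_through_even:
  assumes "gen x y" and "even (length a)" and "through (finite_branch x) a k"
  shows "through (finite_branch y) a k"
  using assms(1) by (cases rule: gen_cases) (use assms(2,3) in \<open>auto intro: less_imp_le
    simp: through_finite_branch prefix_Cons snoc_prefix_snoc_iff snoc_prefix_append_pair_iff\<close>)

lemma P_le_through_odd:
  assumes "P_le x y" and "odd (length a)" and "through (finite_branch y) a k"
  shows "through (finite_branch x) a k"
  using assms(1,3) unfolding P_le_def
  by (induction rule: converse_rtranclp_induct) (auto intro: gen_through_odd[OF _ assms(2)])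

lemma P_le_through_even:
  assumes "P_le x y" and "even (length a)" and "through (finite_branch x) a k"
  shows "through (finite_branch y) a k"
  using assms(1,3) unfolding P_le_def
  by (induction rule: rtranclp_induct) (auto intro: gen_through_even[OF _ assms(2)])

text \<open>Odd cylinders and complements of even cylinders are down-sets, so each disjunct yields a
  clopen down-set containing \<open>s\<close> but not \<open>t\<close>.\<close>

definition cylinder_separated :: "(nat list \<Rightarrow> bool) \<Rightarrow> (nat list \<Rightarrow> bool) \<Rightarrow> bool" where
  "cylinder_separated s t \<longleftrightarrow>
     (\<exists>a k. odd (length a) \<and> through s a k \<and> \<not> through t a k) \<or>
     (\<exists>a k. even (length a) \<and> through t a k \<and> \<not> through s a k)"

lemma P_le_prefix_extends:
  assumes "prefix z y" and "P_le z x" and "\<not> P_le y x"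
  shows "\<exists>j. prefix (z @ [j]) y"
proof -
  have "z \<noteq> y"
    using assms(2,3) by blast
  with assms(1) show ?thesis
    by (intro strict_prefix_snoc_prefix strict_prefixI)
qed

lemma cylinder_separated_deep:
  assumes "even (length d)" and "prefix (d @ [n]) y" and "length x \<le> length d"
  shows "cylinder_separated (finite_branch x) (finite_branch y)"
proof -
  have "\<not> through (finite_branch x) d n"
    using assms(3) prefix_length_le by (fastforce simp: through_finite_branch)
  moreover have "through (finite_branch y) d n"
    using assms(2) by (auto simp: through_finite_branch)
  ultimately show ?thesis
    using assms(1) unfolding cylinder_separated_def by blast
qed

lemma cylinder_separated_even_snoc_on_path:
  assumes nle: "\<not> P_le y (b @ [k])" and b: "even (length b)" and "prefix b y"
    and no_left: "\<forall>i<k. \<not> prefix (b @ [i]) y"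
  shows "cylinder_separated (finite_branch (b @ [k])) (finite_branch y)"
proof -
  obtain j where j: "prefix (b @ [j]) y"
    using P_le_prefix_extends[OF \<open>prefix b y\<close> P_le_even_parent[OF b] nle] by blast
  then have "k \<le> j"
    using no_left by (meson not_le)
  then obtain m where "prefix ((b @ [j]) @ [m]) y"
    using P_le_prefix_extends[OF j P_le_even_siblings[OF b] nle] by blast
  then obtain n where "prefix ((b @ [j, m]) @ [n]) y"
    using P_le_prefix_extends[OF _ P_le_odd_child_sibling[OF b \<open>k \<le> j\<close>] nle] by auto
  from cylinder_separated_deep[OF _ this] show ?thesis
    using b by simp
qed

lemma cylinder_separated_odd_snoc:
  assumes nle: "\<not> P_le y (b @ [k])" and odd: "odd (length b)"
  shows "cylinder_separated (finite_branch (b @ [k])) (finite_branch y)"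
proof (cases "through (finite_branch y) b k")
  case True
  then obtain i where "i \<le> k" "prefix (b @ [i]) y"
    by (auto simp: through_finite_branch)
  then obtain j where "prefix ((b @ [i]) @ [j]) y"
    using P_le_prefix_extends P_le_odd_siblings odd nle by metis
  from cylinder_separated_deep[OF _ this] show ?thesis
    using odd by simp
next
  case False
  moreover have "through (finite_branch (b @ [k])) b k"
    by (auto simp: through_finite_branch)
  ultimately show ?thesis
    using odd unfolding cylinder_separated_def by blast
qed

lemma cylinder_separated_even_snoc_off_path:
  assumes nle: "\<not> P_le y (c @ [l, k])" and odd: "odd (length c)" and off: "\<not> prefix (c @ [l]) y"
  shows "cylinder_separated (finite_branch (c @ [l, k])) (finite_branch y)"
proof (cases "through (finite_branch y) c l")
  case True
  then obtain i where "i \<le> l" "prefix (c @ [i]) y" "i \<noteq> l"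
    using off by (auto simp: through_finite_branch)
  moreover obtain j where "prefix ((c @ [i]) @ [j]) y"
    using P_le_prefix_extends[OF \<open>prefix (c @ [i]) y\<close> P_le_even_child_sibling[OF odd \<open>i \<le> l\<close>]]
      nle by auto
  ultimately have "through (finite_branch y) (c @ [i]) j"
    and "\<not> through (finite_branch (c @ [l, k])) (c @ [i]) j"
    using prefix_length_le by (fastforce simp: through_finite_branch)+
  then show ?thesis
    using odd unfolding cylinder_separated_def by auto
next
  case False
  moreover have "through (finite_branch (c @ [l, k])) c l"
    by (auto simp: through_finite_branch)
  ultimately show ?thesis
    using odd unfolding cylinder_separated_def by blast
qed

lemma cylinder_separated_even_snoc:
  assumes nle: "\<not> P_le y (b @ [k])" and even: "even (length b)"
  shows "cylinder_separated (finite_branch (b @ [k])) (finite_branch y)"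
proof (cases "\<exists>i<k. prefix (b @ [i]) y")
  case True
  then obtain i where "i < k" "prefix (b @ [i]) y"
    by blast
  then have "through (finite_branch y) b i" and "\<not> through (finite_branch (b @ [k])) b i"
    using prefix_length_le by (fastforce simp: through_finite_branch)+
  then show ?thesis
    using even unfolding cylinder_separated_def by blast
next
  case no_left: False
  show ?thesis
  proof (cases "prefix b y")
    case True
    then show ?thesis
      using cylinder_separated_even_snoc_on_path nle even no_left by blast
  next
    case False
    then obtain c l where "b = c @ [l]" and "odd (length c)"
      using even by (cases b rule: rev_cases) auto
    then show ?thesis
      using cylinder_separated_even_snoc_off_path nle False by simp
  qed
qed

lemma cylinder_separated_finite_branch:
  assumes nle: "\<not> P_le y x"
  shows "cylinder_separated (finite_branch x) (finite_branch y)"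
proof (cases x rule: rev_cases)
  case Nil
  then obtain j r where "y = j # r"
    using nle by (cases y) (auto simp: P_le_def)
  then show ?thesis
    using Nil by (intro cylinder_separated_deep[of "[]" j]) auto
next
  case (snoc b k)
  then show ?thesis
    using nle cylinder_separated_odd_snoc cylinder_separated_even_snoc by blast
qed

section \<open>The compact space of branches\<close>

definition branches :: "('a list \<Rightarrow> bool) set" where
  "branches = {s. s [] \<and> (\<forall>l x. s (l @ [x]) \<longrightarrow> s l) \<and> (\<forall>l x y. s (l @ [x]) \<and> s (l @ [y]) \<longrightarrow> x = y)}"

lemma branch_Nil: "s \<in> branches \<Longrightarrow> s []"
  by (simp add: branches_def)

lemma branch_unique_child: "s \<in> branches \<Longrightarrow> s (l @ [x]) \<Longrightarrow> s (l @ [y]) \<Longrightarrow> x = y"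
  by (simp add: branches_def)

lemma branch_prefix_closed:
  assumes "s \<in> branches" and "s m" and "prefix l m"
  shows "s l"
  using assms(2,3)
proof (induction m rule: rev_induct)
  case (snoc x m)
  then show ?case
    using assms(1) by (auto simp: branches_def)
qed simp

lemma finite_branch_in_branches: "finite_branch a \<in> branches"
  by (auto simp: branches_def finite_branch_def dest: prefix_snocD prefix_same_cases)

lemma inj_finite_branch: "inj finite_branch"
  by (rule injI) (metis finite_branch_def prefix_order.antisym prefix_order.refl)

lemma branch_extends:
  assumes s: "s \<in> branches" and infinite: "s \<notin> range finite_branch" and "s l"
  shows "\<exists>x. s (l @ [x])"
proof (rule ccontr)
  assume leaf: "\<nexists>x. s (l @ [x])"
  have "s m \<Longrightarrow> prefix m l" for m
  proof (induction m rule: rev_induct)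
    case (snoc j m)
    then have "prefix m l" "m \<noteq> l"
      using s leaf by (auto simp: branches_def)
    then obtain c where "prefix (m @ [c]) l"
      using strict_prefix_snoc_prefix strict_prefixI by blast
    moreover have "c = j"
      using branch_unique_child[OF s] branch_prefix_closed[OF s \<open>s l\<close> calculation] snoc.prems
      by blast
    ultimately show ?case
      by simp
  qed simp
  then have "s = finite_branch l"
    using branch_prefix_closed[OF s \<open>s l\<close>] by (auto simp: finite_branch_def)
  with infinite show False
    by blast
qed

lemma infinite_branch_maximal:
  assumes s: "s \<in> branches" "s \<notin> range finite_branch" and t: "t \<in> branches" and "s \<le> t"
  shows "s = t"
proof -
  have "t l \<Longrightarrow> s l" for l
  proof (induction l rule: rev_induct)
    case Nil
    show ?case
      using s by (simp add: branch_Nil)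
  next
    case (snoc j l)
    then have "s l"
      using t by (auto simp: branches_def)
    then obtain x where "s (l @ [x])"
      using branch_extends s by blast
    moreover have "x = j"
      using branch_unique_child[OF t] snoc.prems \<open>s \<le> t\<close> calculation by blast
    ultimately show ?case
      by simp
  qed
  with \<open>s \<le> t\<close> show ?thesis
    by (auto simp: le_fun_def)
qed

lemma infinite_branch_extends_parity:
  assumes s: "s \<in> branches" "s \<notin> range finite_branch" and "s l"
  shows "\<exists>a x. prefix l a \<and> (even (length a) \<longleftrightarrow> e) \<and> s (a @ [x])"
proof -
  obtain x where x: "s (l @ [x])"
    using branch_extends s \<open>s l\<close> by blast
  then obtain y where y: "s ((l @ [x]) @ [y])"
    using branch_extends s by blast
  show ?thesis
  proof (cases "even (length l) \<longleftrightarrow> e")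
    case True
    with x show ?thesis
      by (intro exI[of _ l] exI[of _ x]) simp
  next
    case False
    with y show ?thesis
      by (intro exI[of _ "l @ [x]"] exI[of _ y]) auto
  qed
qed

definition cantor_space :: "('a \<Rightarrow> bool) topology" where
  "cantor_space = product_topology (\<lambda>_. discrete_topology UNIV) UNIV"

lemma topspace_cantor_space [simp]: "topspace cantor_space = UNIV"
  by (simp add: cantor_space_def)

lemma compact_space_cantor_space: "compact_space cantor_space"
  by (simp add: cantor_space_def compact_space_product_topology compact_space_discrete_topology)

lemma clopen_cantor_coordinate:
  shows "openin cantor_space {s. s x = b}" and "closedin cantor_space {s. s x = b}"
proof -
  have proj: "continuous_map cantor_space (discrete_topology UNIV) (\<lambda>s. s x)"
    unfolding cantor_space_def by (rule continuous_map_product_projection) simp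
  show "openin cantor_space {s. s x = b}"
    using openin_continuous_map_preimage[OF proj, of "{b}"] by simp
  show "closedin cantor_space {s. s x = b}"
    using closedin_continuous_map_preimage[OF proj, of "{b}"] by simp
qed

lemma closedin_cantor_two_coordinates: "closedin cantor_space {s. P (s x) (s y)}"
proof -
  have "{s. P (s x) (s y)} = (\<Union>(b, c)\<in>{(b, c). P b c}. {s. s x = b} \<inter> {s. s y = c})"
    by auto
  then show ?thesis
    by (auto intro!: closedin_Union clopen_cantor_coordinate)
qed

lemma closedin_branches: "closedin cantor_space branches"
proof -
  have eq: "branches = {s. s [] = True}
      \<inter> (\<Inter>l. \<Inter>x. {s. s (l @ [x]) \<longrightarrow> s l})
      \<inter> (\<Inter>l. \<Inter>x. \<Inter>y. {s. s (l @ [x]) \<and> s (l @ [y]) \<longrightarrow> x = y})"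
    unfolding branches_def by blast
  have closed_parent: "closedin cantor_space {s. s (l @ [x]) \<longrightarrow> s l}" for l x
    by (rule closedin_cantor_two_coordinates[of "\<lambda>a b. a \<longrightarrow> b" "l @ [x]" l])
  have closed_unique: "closedin cantor_space {s. s (l @ [x]) \<and> s (l @ [y]) \<longrightarrow> x = y}" for l x y
    by (rule closedin_cantor_two_coordinates[of "\<lambda>a b. a \<and> b \<longrightarrow> x = y" "l @ [x]" "l @ [y]"])
  show ?thesis
    unfolding eq
    by (intro closedin_Int closedin_INT UNIV_not_empty clopen_cantor_coordinate(2)
        closed_parent closed_unique)
qed

definition branch_space :: "('a list \<Rightarrow> bool) topology" where
  "branch_space = subtopology cantor_space branches"

lemma topspace_branch_space [simp]: "topspace branch_space = branches"
  by (simp add: branch_space_def)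

lemma compact_space_branch_space: "compact_space branch_space"
  unfolding branch_space_def
  by (intro compact_space_subtopology closedin_compact_space compact_space_cantor_space closedin_branches)

section \<open>Representability of the completed poset\<close>

definition cylinder :: "nat list \<Rightarrow> nat \<Rightarrow> (nat list \<Rightarrow> bool) set" where
  "cylinder a k = {s \<in> branches. through s a k}"

lemma clopen_cylinder: "openin branch_space (cylinder a k)" "closedin branch_space (cylinder a k)"
proof -
  have eq: "cylinder a k = branches \<inter> (\<Union>i\<in>{..k}. {s. s (a @ [i]) = True})"
    by (auto simp: cylinder_def through_def)
  have "openin cantor_space {s. s (a @ [i]) = True}" "closedin cantor_space {s. s (a @ [i]) = True}" for i
    by (rule clopen_cantor_coordinate)+
  then show "openin branch_space (cylinder a k)" "closedin branch_space (cylinder a k)"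
    unfolding eq branch_space_def
    by (intro openin_subtopology_Int2 closedin_subtopology_Int_closed openin_Union closedin_Union;
        auto)+
qed

lemma down_set_cylinder_odd:
  assumes "odd (length a)"
  shows "down_set branches (image_order finite_branch P_le) (cylinder a k)"
  using P_le_through_odd[OF _ assms]
  by (auto simp: down_set_def cylinder_def image_order_def)

lemma down_set_cylinder_complement_even:
  assumes "even (length a)"
  shows "down_set branches (image_order finite_branch P_le) (branches - cylinder a k)"
  using P_le_through_even[OF _ assms]
  by (auto simp: down_set_def cylinder_def image_order_def)

lemma cylinder_separated_down_set:
  assumes "s \<in> branches" and "t \<in> branches" and "cylinder_separated s t"
  shows "\<exists>U. openin branch_space U \<and> closedin branch_space U
    \<and> down_set branches (image_order finite_branch P_le) U \<and> s \<in> U \<and> t \<notin> U"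
  using assms(3) unfolding cylinder_separated_def
proof (elim disjE exE conjE)
  fix a k assume odd: "odd (length a)" and "through s a k" "\<not> through t a k"
  then have "s \<in> cylinder a k" "t \<notin> cylinder a k"
    using assms(1) by (simp_all add: cylinder_def)
  then show ?thesis
    using clopen_cylinder[of a k] down_set_cylinder_odd[OF odd, of k] by blast
next
  fix a k assume even: "even (length a)" and "through t a k" "\<not> through s a k"
  then have "s \<in> branches - cylinder a k" "t \<notin> branches - cylinder a k"
    using assms by (simp_all add: cylinder_def)
  moreover have "openin branch_space (branches - cylinder a k)"
    and "closedin branch_space (branches - cylinder a k)"
    using openin_diff[OF openin_topspace clopen_cylinder(2)[of a k]]
      closedin_diff[OF closedin_topspace clopen_cylinder(1)[of a k]] by simp_all
  ultimately show ?thesis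
    using down_set_cylinder_complement_even[OF even, of k] by blast
qed

lemma infinite_branch_separated:
  assumes s: "s \<in> branches" "s \<notin> range finite_branch" and t: "t \<in> branches" and "s \<noteq> t"
  shows "\<exists>a k. (even (length a) \<longleftrightarrow> e) \<and> through s a k \<and> \<not> through t a k"
proof -
  obtain l where "s l" "\<not> t l"
    using infinite_branch_maximal[OF s t] \<open>s \<noteq> t\<close> by (auto simp: le_fun_def)
  then obtain a k where a: "prefix l a" "even (length a) \<longleftrightarrow> e" "s (a @ [k])"
    using infinite_branch_extends_parity[OF s] by blast
  have "\<not> through t a k"
    using branch_prefix_closed[OF t] a(1) \<open>\<not> t l\<close>
    by (auto simp: through_def intro: prefix_order.order_trans)
  with a show ?thesis
    by (auto simp: through_def)
qed

lemma cylinder_separated_branches: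
  assumes s: "s \<in> branches" and t: "t \<in> branches"
    and nle: "\<not> image_order finite_branch P_le t s"
  shows "cylinder_separated s t"
proof -
  consider "t \<notin> range finite_branch" | "s \<notin> range finite_branch"
    | x y where "s = finite_branch x" "t = finite_branch y"
    by blast
  then show ?thesis
  proof cases
    case 1
    then show ?thesis
      using infinite_branch_separated[OF t 1 s, of True] nle
      unfolding cylinder_separated_def image_order_def by metis
  next
    case 2
    then show ?thesis
      using infinite_branch_separated[OF s 2 t, of False] nle
      unfolding cylinder_separated_def image_order_def by metis
  next
    case 3
    then show ?thesis
      using cylinder_separated_finite_branch nle by (auto simp: image_order_def)
  qed
qed

lemma representable_branches: "representable branches (image_order finite_branch P_le)"
  unfolding representable_def
  using partial_order_on_set_image_order[OF inj_finite_branch partial_order_P_le]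
    compact_space_branch_space cylinder_separated_down_set cylinder_separated_branches
  by (intro conjI exI[of _ branch_space]) auto

theorem lemma2p5:
  shows "(\<exists>(Q :: nat list set set set) (le :: nat list set set \<Rightarrow> nat list set set \<Rightarrow> bool) C f.
            representable Q le \<and> order_component Q le C \<and>
            order_iso f (UNIV :: nat list set) P_le C le)
       \<and> order_component (UNIV :: nat list set) P_le UNIV"
proof -
  \<comment> \<open>any injection of the branches into the carrier type of the statement will do\<close>
  define g :: "(nat list \<Rightarrow> bool) \<Rightarrow> nat list set set" where "g s = {Collect s}" for s
  have "inj g"
    by (rule injI) (simp add: g_def Collect_inj)
  let ?le = "image_order (g \<circ> finite_branch) P_le"
  have "representable (g ` branches) ?le"
    using representable_branches order_iso_image_order_comp[OF \<open>inj g\<close>]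
    by (rule representable_order_iso)
  moreover have "order_component (g ` branches) ?le (range (g \<circ> finite_branch))"
    using finite_branch_in_branches order_component_P_le
    by (intro order_component_image_order) auto
  moreover have "order_iso (g \<circ> finite_branch) UNIV P_le (range (g \<circ> finite_branch)) ?le"
    using \<open>inj g\<close> inj_finite_branch partial_order_P_le
    by (intro order_iso_image_order inj_compose)
  ultimately show ?thesis
    using order_component_P_le by blast
qed

end
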